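(* Let $\mathcal{D}\subset\mathbb{R}^N$ be open, bounded, connected, let $F:\partial\mathcal{D}\to\mathbb{R}$ be continuous, and for $\epsilon\in(0,1)$ define $u^\epsilon:\mathcal{D}\to\mathbb{R}$ by $u^\epsilon(x_0)=\mathbb{E}[F\circ X^{\epsilon,x_0}]=\int_\Omega F\circ X^{\epsilon,x_0}\,d\mathbb{P}$. Then $u^\epsilon$ is continuous and satisfies $$u^\epsilon(x)=\frac{1}{|B_{\epsilon\wedge\operatorname{dist}(x,\partial\mathcal{D})}(x)|}\int_{B_{\epsilon\wedge\operatorname{dist}(x,\partial\mathcal{D})}(x)}u^\epsilon(y)\,dy\quad\text{for all }x\in\mathcal{D}.$$
   Context: Probability space: $\Omega_1=B_1(0)\subset\mathbb{R}^N$ with Borel $\sigma$-algebra and normalised Lebesgue measure $\mathbb{P}_1$; $(\Omega,\mathcal{F},\mathbb{P})$ is the countable product $\Omega=(\Omega_1)^{\mathbb{N}}$, $\omega=\{w_i\}_{i\ge1}$, with $\mathcal{F}_n$ the $\sigma$-algebra generated by the first $n$ coordinates. The $\epsilon$-ball walk started at $x_0\in\mathcal{D}$: $X_0^{\epsilon,x_0}\equiv x_0$, $X_n^{\epsilon,x_0}=X_{n-1}^{\epsilon,x_0}+\big(\epsilon\wedge\operatorname{dist}(X_{n-1}^{\epsilon,x_0},\partial\mathcal{D})\big)w_n$ for $n\ge1$. This sequence converges $\mathbb{P}$-a.s. to a random variable $X^{\epsilon,x_0}:\Omega\to\partial\mathcal{D}$, and $X^{\epsilon,x_0}$ denotes this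 limit. *)

theory Defs
  imports "HOL-Probability.Probability"
begin

definition ball_prob :: "('a::euclidean_space) measure" where
  "ball_prob = uniform_measure lborel (ball 0 1)"

text \<open>The probability space Omega = (B_1(0))^N with the product measure;
  omega i is the coordinate w_(i+1).\<close>
definition Omega_prob :: "(nat \<Rightarrow> 'a::euclidean_space) measure" where
  "Omega_prob = PiM UNIV (\<lambda>_. ball_prob)"

fun ball_walk :: "'a::euclidean_space set \<Rightarrow> real \<Rightarrow> 'a \<Rightarrow> (nat \<Rightarrow> 'a) \<Rightarrow> nat \<Rightarrow> 'a" where
  "ball_walk D \<epsilon> x0 \<omega> 0 = x0"
| "ball_walk D \<epsilon> x0 \<omega> (Suc n) =
     ball_walk D \<epsilon> x0 \<omega> n
     + (min \<epsilon> (infdist (ball_walk D \<epsilon> x0 \<omega> n) (frontier D))) *\<^sub>R \<omega> n"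

text \<open>F o X^{eps,x0}: defined on the (full-measure) event where the walk converges to a
  boundary point; set to 0 on the complementary null event.\<close>
definition F_of_limit :: "'a::euclidean_space set \<Rightarrow> ('a \<Rightarrow> real) \<Rightarrow> real \<Rightarrow> 'a \<Rightarrow> (nat \<Rightarrow> 'a) \<Rightarrow> real" where
  "F_of_limit D F \<epsilon> x0 \<omega> =
     (if convergent (ball_walk D \<epsilon> x0 \<omega>) \<and> lim (ball_walk D \<epsilon> x0 \<omega>) \<in> frontier D
      then F (lim (ball_walk D \<epsilon> x0 \<omega>)) else 0)"

definition u_eps :: "'a::euclidean_space set \<Rightarrow> ('a \<Rightarrow> real) \<Rightarrow> real \<Rightarrow> 'a \<Rightarrow> real" where
  "u_eps D F \<epsilon> x0 = (\<integral>\<omega>. F_of_limit D F \<epsilon> x0 \<omega> \<partial>Omega_prob)"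

end

theory Submission
  imports Defs
begin

text \<open>
  Prepending a first step s to \<omega> turns the walk started at x into the walk started at
  x + (\<epsilon> \<and> dist(x, \<partial>D)) s, shifted by one index. A shift changes neither convergence
  nor the limit, so F(X^{\<epsilon>,x}(s, \<omega>)) = F(X^{\<epsilon>,x + (\<epsilon> \<and> dist(x, \<partial>D)) s}(\<omega>)) for
  every \<omega>, and no almost sure convergence of the walk is needed.
  Since the product measure on (B_1(0))^N is the image of B_1(0) \<times> (B_1(0))^N under
  prepending, Fubini gives u^\<epsilon>(x) = E[u^\<epsilon>(x + (\<epsilon> \<and> dist(x, \<partial>D)) w_1)], which is the
  ball average after rescaling. Continuity follows from this mean value property:
  u^\<epsilon> is bounded and measurable, and the integral of a bounded function over a ball whose
  centre and radius move continuously is continuous by dominated convergence, the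
  bounding sphere being a null set.
\<close>

lemma ball_walk_case_nat_Suc:
  "ball_walk D e x (case_nat s w) (Suc n) =
   ball_walk D e (x + min e (infdist x (frontier D)) *\<^sub>R s) w n"
  by (induction n) simp_all

lemma F_of_limit_case_nat:
  "F_of_limit D F e x (case_nat s w) =
   F_of_limit D F e (x + min e (infdist x (frontier D)) *\<^sub>R s) w"
proof -
  let ?X = "ball_walk D e x (case_nat s w)"
  have shift: "(\<lambda>n. ?X (Suc n)) = ball_walk D e (x + min e (infdist x (frontier D)) *\<^sub>R s) w"
    using ball_walk_case_nat_Suc by blast
  have "lim ?X = lim (\<lambda>n. ?X (Suc n))"
    unfolding lim_def filterlim_sequentially_Suc ..
  then show ?thesis
    unfolding F_of_limit_def shift[symmetric] convergent_Suc_iff by simp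
qed

lemma sets_ball_prob [simp, measurable_cong]: "sets ball_prob = sets borel"
  by (simp add: ball_prob_def)

lemma emeasure_lborel_ball_neq_0:
  fixes c :: "'a::euclidean_space"
  assumes "0 < r"
  shows "emeasure lborel (ball c r) \<noteq> 0"
proof -
  have "0 < unit_ball_vol (real DIM('a))" by (rule unit_ball_vol_pos) simp
  with assms show ?thesis by (auto simp: emeasure_ball simp del: unit_ball_vol_pos)
qed

lemma emeasure_lborel_ball_neq_infinity: "emeasure lborel (ball (c::'a::euclidean_space) r) \<noteq> \<infinity>"
  using emeasure_lborel_ball_finite[of c r] by simp

lemma prob_space_ball_prob: "prob_space (ball_prob :: 'a::euclidean_space measure)"
  unfolding ball_prob_def
  by (intro prob_space_uniform_measure emeasure_lborel_ball_neq_0 emeasure_lborel_ball_neq_infinity) simp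

lemma prob_space_Omega_prob: "prob_space (Omega_prob :: (nat \<Rightarrow> 'a::euclidean_space) measure)"
  unfolding Omega_prob_def using prob_space_ball_prob by (intro prob_space_PiM) auto

lemma measurable_Omega_prob_component [measurable]:
  "(\<lambda>w. w n) \<in> borel_measurable (Omega_prob :: (nat \<Rightarrow> 'a::euclidean_space) measure)"
proof -
  have "(\<lambda>w. w n) \<in> (Omega_prob :: (nat \<Rightarrow> 'a) measure) \<rightarrow>\<^sub>M ball_prob"
    unfolding Omega_prob_def by (rule measurable_component_singleton) simp
  then show ?thesis by (simp cong: measurable_cong_sets)
qed

lemma measurable_ball_walk [measurable]:
  "(\<lambda>p. ball_walk D e (fst p) (snd p) n)
     \<in> borel_measurable (borel \<Otimes>\<^sub>M (Omega_prob :: (nat \<Rightarrow> 'a::euclidean_space) measure))"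
proof (induction n)
  case 0
  show ?case by simp
next
  case (Suc n)
  have "(\<lambda>y::'a. min e (infdist y (frontier D))) \<in> borel_measurable borel"
    by (intro borel_measurable_continuous_onI continuous_intros)
  with Suc show ?case
    by simp measurable
qed

lemma measurable_F_of_limit:
  assumes "continuous_on (frontier D) F"
  shows "(\<lambda>(x, w). F_of_limit D F e x w)
     \<in> borel_measurable (borel \<Otimes>\<^sub>M (Omega_prob :: (nat \<Rightarrow> 'a::euclidean_space) measure))"
proof -
  let ?M = "borel \<Otimes>\<^sub>M (Omega_prob :: (nat \<Rightarrow> 'a) measure)"
  define X where "X p = ball_walk D e (fst p) (snd p)" for p :: "'a \<times> (nat \<Rightarrow> 'a)"
  define F0 where "F0 y = (if y \<in> frontier D then F y else 0)" for y
  have "F0 \<in> borel_measurable borel"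
    unfolding F0_def by (intro borel_measurable_continuous_on_if assms continuous_on_const) auto
  then have "(\<lambda>p. F0 (lim (X p))) \<in> borel_measurable ?M"
    unfolding X_def by (intro measurable_compose[OF borel_measurable_lim_metric]) simp_all
  moreover have "{p \<in> space ?M. Cauchy (X p)} \<in> sets ?M"
    unfolding X_def by (intro sets_Collect_Cauchy) simp
  ultimately have "(\<lambda>p. if Cauchy (X p) then F0 (lim (X p)) else 0) \<in> borel_measurable ?M"
    by (intro measurable_If) simp_all
  moreover have "(\<lambda>(x, w). F_of_limit D F e x w) = (\<lambda>p. if Cauchy (X p) then F0 (lim (X p)) else 0)"
    by (auto simp: fun_eq_iff F_of_limit_def Cauchy_convergent_iff X_def F0_def)
  ultimately show ?thesis by simp
qed

lemma F_of_limit_bounded: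
  assumes "bounded D" "continuous_on (frontier D) F"
  obtains C where "\<And>x w. \<bar>F_of_limit D F e x w\<bar> \<le> C"
proof -
  have "bounded (F ` frontier D)"
    by (intro compact_imp_bounded compact_continuous_image assms compact_frontier_bounded)
  then obtain C where "\<And>y. y \<in> frontier D \<Longrightarrow> \<bar>F y\<bar> \<le> C" "0 < C"
    by (auto simp: bounded_pos)
  then have "\<bar>F_of_limit D F e x w\<bar> \<le> C" for x w
    by (simp add: F_of_limit_def)
  then show thesis by (rule that)
qed

lemma abs_u_eps_le:
  fixes D :: "'a::euclidean_space set"
  assumes "continuous_on (frontier D) F" and bound: "\<And>x w. \<bar>F_of_limit D F e x w\<bar> \<le> C"
  shows "\<bar>u_eps D F e x\<bar> \<le> C"
proof -
  interpret prob_space "Omega_prob :: (nat \<Rightarrow> 'a) measure" by (rule prob_space_Omega_prob)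
  have "(\<lambda>w. F_of_limit D F e x w) \<in> borel_measurable (Omega_prob :: (nat \<Rightarrow> 'a) measure)"
    using measurable_Pair2[OF measurable_F_of_limit[OF assms(1)]] by simp
  then have "integrable Omega_prob (\<lambda>w. F_of_limit D F e x w)"
    by (intro integrable_const_bound[where B=C]) (simp_all add: bound)
  then have "\<bar>u_eps D F e x\<bar> \<le> (\<integral>w. C \<partial>(Omega_prob :: (nat \<Rightarrow> 'a) measure))"
    unfolding u_eps_def by (intro order_trans[OF integral_abs_bound integral_mono]) (simp_all add: bound)
  then show ?thesis by (simp add: prob_space)
qed

lemma borel_measurable_u_eps:
  assumes "continuous_on (frontier D) F"
  shows "u_eps D F e \<in> borel_measurable (borel :: 'a::euclidean_space measure)"
proof -
  interpret prob_space "Omega_prob :: (nat \<Rightarrow> 'a) measure" by (rule prob_space_Omega_prob)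
  show ?thesis
    unfolding u_eps_def[abs_def]
    by (rule borel_measurable_lebesgue_integral[OF measurable_F_of_limit[OF assms]])
qed

lemma u_eps_one_step:
  fixes D :: "'a::euclidean_space set"
  assumes "bounded D" and cont: "continuous_on (frontier D) F"
  shows "u_eps D F e x = (\<integral>s. u_eps D F e (x + min e (infdist x (frontier D)) *\<^sub>R s) \<partial>ball_prob)"
proof -
  interpret B: prob_space "ball_prob :: 'a measure" by (rule prob_space_ball_prob)
  interpret S: sequence_space "ball_prob :: 'a measure" ..
  interpret P: pair_prob_space "ball_prob :: 'a measure" S.S ..
  let ?r = "min e (infdist x (frontier D))"
  let ?G = "F_of_limit D F e"
  obtain C where C: "\<And>x w. \<bar>?G x w\<bar> \<le> C"
    using F_of_limit_bounded[OF assms, where e=e] by blast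
  have Omega: "Omega_prob = S.S" unfolding Omega_prob_def ..
  have G: "(\<lambda>(x, w). ?G x w) \<in> borel_measurable (borel \<Otimes>\<^sub>M S.S)"
    using measurable_F_of_limit[OF cont] by (simp add: Omega)
  have "u_eps D F e x = (\<integral>w. ?G x w \<partial>distr (ball_prob \<Otimes>\<^sub>M S.S) S.S (\<lambda>(s, w). case_nat s w))"
    by (simp add: u_eps_def Omega S.PiM_iter)
  also have "\<dots> = (\<integral>p. ?G (x + ?r *\<^sub>R fst p) (snd p) \<partial>(ball_prob \<Otimes>\<^sub>M S.S))"
    using measurable_Pair2[OF G]
    by (subst integral_distr) (auto simp: F_of_limit_case_nat case_prod_beta')
  also have "\<dots> = (\<integral>s. \<integral>w. ?G (x + ?r *\<^sub>R s) w \<partial>S.S \<partial>ball_prob)"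
  proof -
    have "(\<lambda>p. ?G (x + ?r *\<^sub>R fst p) (snd p)) \<in> borel_measurable (ball_prob \<Otimes>\<^sub>M S.S)"
      using measurable_compose[OF _ G, of "\<lambda>p. (x + ?r *\<^sub>R fst p, snd p)"] by simp
    then have "integrable (ball_prob \<Otimes>\<^sub>M S.S) (\<lambda>p. ?G (x + ?r *\<^sub>R fst p) (snd p))"
      by (intro P.integrable_const_bound[where B=C]) (simp_all add: C)
    from P.integral_fst'[OF this] show ?thesis by simp
  qed
  also have "\<dots> = (\<integral>s. u_eps D F e (x + ?r *\<^sub>R s) \<partial>ball_prob)"
    by (simp add: u_eps_def Omega)
  finally show ?thesis .
qed

lemma integral_uniform_measure:
  fixes f :: "'a \<Rightarrow> real"
  assumes "A \<in> sets M" "emeasure M A \<noteq> 0" "emeasure M A \<noteq> \<infinity>" "f \<in> borel_measurable M"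
  shows "(\<integral>x. f x \<partial>uniform_measure M A) = (LINT x:A|M. f x) / measure M A"
proof -
  have pos: "0 < measure M A"
    using assms(2,3) by (simp add: emeasure_eq_ennreal_measure zero_less_measure_iff)
  have "1 / ennreal (measure M A) = ennreal (1 / measure M A)"
    using divide_ennreal[of 1 "measure M A"] pos by simp
  then have "(\<lambda>x. indicator A x / emeasure M A) = (\<lambda>x. ennreal (indicator A x / measure M A))"
    using assms(3) by (auto simp: fun_eq_iff indicator_def emeasure_eq_ennreal_measure)
  then have "uniform_measure M A = density M (\<lambda>x. ennreal (indicator A x / measure M A))"
    by (simp add: uniform_measure_def)
  then have "(\<integral>x. f x \<partial>uniform_measure M A) = (\<integral>x. indicator A x / measure M A * f x \<partial>M)"
    using assms(1,4) by (simp add: integral_real_density)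
  also have "\<dots> = (LINT x:A|M. f x) / measure M A"
    by (simp add: set_lebesgue_integral_def)
  finally show ?thesis .
qed

lemma set_integral_ball_rescale:
  fixes f :: "'a::euclidean_space \<Rightarrow> real"
  assumes f: "f \<in> borel_measurable borel" and r: "0 < r"
  shows "(LINT y:ball x r|lborel. f y) = r ^ DIM('a) * (LINT s:ball 0 1|lborel. f (x + r *\<^sub>R s))"
proof -
  have lborel: "lborel = density (distr lborel borel (\<lambda>s. x + r *\<^sub>R s)) (\<lambda>_. \<bar>r\<bar> ^ DIM('a))"
    using r by (intro lborel_affine) simp
  have "indicator (ball x r) (x + r *\<^sub>R s) = (indicator (ball 0 1) s :: real)" for s
    using r by (auto simp: indicator_def dist_norm)
  moreover have "(\<lambda>y. indicator (ball x r) y * f y) \<in> borel_measurable borel"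
    by (intro borel_measurable_times borel_measurable_indicator f) simp
  ultimately show ?thesis
    using r unfolding set_lebesgue_integral_def
    by (subst lborel) (simp add: integral_density integral_distr)
qed

lemma integral_ball_prob_affine:
  fixes f :: "'a::euclidean_space \<Rightarrow> real"
  assumes f: "f \<in> borel_measurable borel" and r: "0 < r"
  shows "(\<integral>s. f (x + r *\<^sub>R s) \<partial>ball_prob) = (LINT y:ball x r|lborel. f y) / measure lborel (ball x r)"
proof -
  have affine: "(\<lambda>s::'a. x + r *\<^sub>R s) \<in> borel_measurable borel"
    by (intro borel_measurable_continuous_onI continuous_intros)
  have f_affine: "(\<lambda>s. f (x + r *\<^sub>R s)) \<in> borel_measurable lborel"
    using measurable_compose[OF affine f] by simp
  have rn: "r ^ DIM('a) \<noteq> 0"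
    using r by simp
  have "(\<integral>s. f (x + r *\<^sub>R s) \<partial>ball_prob)
      = (LINT s:ball 0 1|lborel. f (x + r *\<^sub>R s)) / measure lborel (ball (0::'a) 1)"
    unfolding ball_prob_def
    by (intro integral_uniform_measure f_affine emeasure_lborel_ball_neq_0
        emeasure_lborel_ball_neq_infinity) simp_all
  also have "\<dots> = (r ^ DIM('a) * (LINT s:ball 0 1|lborel. f (x + r *\<^sub>R s)))
      / (r ^ DIM('a) * measure lborel (ball (0::'a) 1))"
    by (simp only: mult_divide_mult_cancel_left_if rn if_False)
  also have "\<dots> = (LINT y:ball x r|lborel. f y) / measure lborel (ball x r)"
    using content_ball_conv_unit_ball[of r x] r by (simp add: set_integral_ball_rescale[OF f r])
  finally show ?thesis .
qed

lemma indicator_ball_tendsto: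
  assumes c: "(c \<longlongrightarrow> x) F" and \<rho>: "(\<rho> \<longlongrightarrow> r) F" and y: "dist x y \<noteq> r"
  shows "((\<lambda>i. indicator (ball (c i) (\<rho> i)) y :: real) \<longlongrightarrow> indicator (ball x r) y) F"
proof (rule tendsto_eventually)
  have d: "((\<lambda>i. dist (c i) y - \<rho> i) \<longlongrightarrow> dist x y - r) F"
    by (intro tendsto_intros c \<rho>)
  consider "dist x y < r" | "r < dist x y" using y by linarith
  then show "\<forall>\<^sub>F i in F. indicator (ball (c i) (\<rho> i)) y = (indicator (ball x r) y :: real)"
  proof cases
    case 1
    with order_tendstoD(2)[OF d, of 0] show ?thesis
      by (auto elim!: eventually_mono simp: indicator_def)
  next
    case 2
    with order_tendstoD(1)[OF d, of 0] show ?thesis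
      by (auto elim!: eventually_mono simp: indicator_def)
  qed
qed

lemma isCont_set_integral_ball:
  fixes f :: "'a::euclidean_space \<Rightarrow> real"
  assumes f: "f \<in> borel_measurable borel" and bound: "\<And>y. \<bar>f y\<bar> \<le> C" and rad: "isCont rad x"
  shows "isCont (\<lambda>z. LINT y:ball z (rad z)|lborel. f y) x"
  unfolding continuous_at_sequentially comp_def
proof (intro allI impI)
  fix z assume z: "z \<longlonglongrightarrow> x"
  have rad_z: "(\<lambda>n. rad (z n)) \<longlonglongrightarrow> rad x"
    using isCont_tendsto_compose[OF rad z] .
  have "Bseq (\<lambda>n. norm (z n) + rad (z n))"
    by (rule convergent_imp_Bseq[OF convergentI[OF tendsto_add[OF tendsto_norm[OF z] rad_z]]])
  then obtain K where "\<forall>n. norm (norm (z n) + rad (z n)) \<le> K"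
    unfolding Bseq_def by blast
  then have K: "norm (z n) + rad (z n) \<le> K" for n
    using abs_ge_self order_trans unfolding real_norm_def by blast
  have ball_K: "y \<in> ball 0 K" if "y \<in> ball (z n) (rad (z n))" for n y
  proof -
    have "norm y \<le> norm (z n) + dist (z n) y"
      using norm_triangle_ineq[of "z n" "y - z n"] by (simp add: dist_norm norm_minus_commute)
    with that K[of n] show ?thesis
      by simp
  qed
  have C: "0 \<le> C"
    using bound[of x] by linarith
  have dominated: "norm (indicator (ball (z n) (rad (z n))) y *\<^sub>R f y) \<le> C * indicator (ball 0 K) y"
    for n y
    using bound[of y] ball_K[of y n] C by (cases "y \<in> ball (z n) (rad (z n))") (simp_all add: indicator_def)
  have meas: "(\<lambda>y. indicator (ball c \<rho>) y *\<^sub>R f y) \<in> borel_measurable lborel" for c \<rho>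
    unfolding measurable_lborel2 by (intro borel_measurable_scaleR borel_measurable_indicator f) simp
  have sphere: "sphere x (rad x) \<in> null_sets lborel"
    using negligible_sphere[of x "rad x"]
    by (auto simp: null_sets_completion_iff negligible_iff_null_sets negligible_convex_frontier)
  have pointwise: "AE y in lborel. (\<lambda>n. indicator (ball (z n) (rad (z n))) y *\<^sub>R f y)
      \<longlonglongrightarrow> indicator (ball x (rad x)) y *\<^sub>R f y"
    using AE_not_in[OF sphere]
  proof eventually_elim
    case (elim y)
    then have "dist x y \<noteq> rad x" by simp
    then show ?case
      by (intro tendsto_scaleR indicator_ball_tendsto z rad_z tendsto_const)
  qed
  have integrable: "integrable lborel (\<lambda>y. C * indicator (ball (0::'a) K) y)"
    using emeasure_lborel_ball_finite[of "0::'a" K]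
    by (intro integrable_mult_right integrable_real_indicator) simp_all
  show "(\<lambda>n. LINT y:ball (z n) (rad (z n))|lborel. f y) \<longlonglongrightarrow> (LINT y:ball x (rad x)|lborel. f y)"
    unfolding set_lebesgue_integral_def
    by (rule integral_dominated_convergence[OF meas meas integrable pointwise AE_I2[OF dominated]])
qed

lemma isCont_ball_average:
  fixes f :: "'a::euclidean_space \<Rightarrow> real"
  assumes f: "f \<in> borel_measurable borel" and bound: "\<And>y. \<bar>f y\<bar> \<le> C"
    and rad: "isCont rad x" "0 < rad x" "\<And>z. 0 \<le> rad z"
  shows "isCont (\<lambda>z. (LINT y:ball z (rad z)|lborel. f y) / measure lborel (ball z (rad z))) x"
proof -
  have "measure lborel (ball z (rad z)) = unit_ball_vol DIM('a) * rad z ^ DIM('a)" for z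
    using rad(3) by (rule content_ball)
  then have "isCont (\<lambda>z. measure lborel (ball z (rad z))) x"
    using rad(1) by (simp add: continuous_intros)
  moreover have "measure lborel (ball x (rad x)) \<noteq> 0"
    using content_ball_pos[OF rad(2)] by simp
  ultimately show ?thesis
    by (intro isCont_divide isCont_set_integral_ball[OF f bound rad(1)])
qed

lemma infdist_frontier_pos:
  fixes D :: "'a::euclidean_space set"
  assumes "open D" "x \<in> D" "D \<noteq> UNIV"
  shows "0 < infdist x (frontier D)"
proof (rule infdist_pos_not_in_closed)
  show "frontier D \<noteq> {}" using assms(2,3) by (auto simp: frontier_eq_empty)
  show "x \<notin> frontier D" using assms(1,2) by (simp add: frontier_def interior_open)
qed simp

lemma u_eps_mean_value:
  fixes D :: "'a::euclidean_space set"
  assumes "open D" "bounded D" "continuous_on (frontier D) F" "0 < e" "x \<in> D"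
  shows "u_eps D F e x =
    (LINT y:ball x (min e (infdist x (frontier D)))|lborel. u_eps D F e y)
      / measure lborel (ball x (min e (infdist x (frontier D))))"
proof -
  have "D \<noteq> UNIV"
    using assms(2) not_bounded_UNIV by auto
  with assms(1,4,5) have "0 < min e (infdist x (frontier D))"
    by (simp add: infdist_frontier_pos)
  then show ?thesis
    unfolding u_eps_one_step[OF assms(2,3), of e x]
    by (rule integral_ball_prob_affine[OF borel_measurable_u_eps[OF assms(3)]])
qed

theorem theorem2p4:
  fixes D :: "'a::euclidean_space set" and F :: "'a \<Rightarrow> real" and \<epsilon> :: real
  assumes "open D" and "bounded D" and "connected D"
    and "continuous_on (frontier D) F"
    and "0 < \<epsilon>" and "\<epsilon> < 1"
  shows "continuous_on D (u_eps D F \<epsilon>)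
    \<and> (\<forall>x\<in>D. u_eps D F \<epsilon> x =
          (LINT y:ball x (min \<epsilon> (infdist x (frontier D)))|lborel. u_eps D F \<epsilon> y)
          / measure lborel (ball x (min \<epsilon> (infdist x (frontier D)))))"
proof -
  let ?rad = "\<lambda>z. min \<epsilon> (infdist z (frontier D))"
  have mean_value: "\<forall>x\<in>D. u_eps D F \<epsilon> x =
      (LINT y:ball x (?rad x)|lborel. u_eps D F \<epsilon> y) / measure lborel (ball x (?rad x))"
    using u_eps_mean_value[OF assms(1,2,4,5)] by blast
  obtain C where C: "\<And>x w. \<bar>F_of_limit D F \<epsilon> x w\<bar> \<le> C"
    using F_of_limit_bounded[OF assms(2,4), where e=\<epsilon>] by blast
  have "continuous_on D (\<lambda>z. (LINT y:ball z (?rad z)|lborel. u_eps D F \<epsilon> y)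
      / measure lborel (ball z (?rad z)))"
  proof (intro continuous_at_imp_continuous_on ballI isCont_ball_average)
    fix x assume "x \<in> D"
    show "u_eps D F \<epsilon> \<in> borel_measurable borel" by (rule borel_measurable_u_eps[OF assms(4)])
    show "\<bar>u_eps D F \<epsilon> y\<bar> \<le> C" for y by (rule abs_u_eps_le[OF assms(4) C])
    show "isCont ?rad x" by (intro continuous_intros)
    show "0 < ?rad x" using \<open>x \<in> D\<close> assms(1,2,5) not_bounded_UNIV by (auto intro: infdist_frontier_pos)
    show "0 \<le> ?rad z" for z using assms(5) by (simp add: infdist_nonneg)
  qed
  then have "continuous_on D (u_eps D F \<epsilon>)"
    by (rule continuous_on_eq) (use mean_value in auto)
  then show ?thesis using mean_value ..
qed

end
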